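(* Let $l\ge2$, $d\ge2$. For $u\in\sigma^\vee\cap M$ with $\deg(u)=N(l-1)d$ one has $0\le\varphi(u)\le(l-1)N$. Moreover there is a constant $C(l,d)$ depending only on $l,d$ such that for all sufficiently large $N$ and all integers $0\le m\le(l-1)N$, $$\Big|\#\{u\in\sigma^\vee\cap M:\varphi(u)=m,\ \deg(u)=Nd(l-1)\}-d^{ld-1}\frac{(N(l-1)-m)^{l(d-1)-1}}{(l(d-1)-1)!}\Big|\le C(l,d)N^{l(d-1)-2}.$$
   Context: $\mathbf{Z}^{ld}$ has basis $e_{ij}$ ($1\le i\le l,1\le j\le d$), $\epsilon_i=\sum_je_{ij}$, $M=\mathbf{Z}^{ld}/\langle\epsilon_1-\epsilon_2,\dots,\epsilon_1-\epsilon_l\rangle$ with images $e_{ij}$, $\epsilon$; $\sigma^\vee\subset M_\mathbf{R}$ is the cone generated by the $e_{ij}$. $\deg\colon M\to\mathbf{Z}$ is the homomorphism with $\deg(e_{ij})=1$. $\varphi\colon M_\mathbf{R}\to\mathbf{R}$ is defined by $\varphi(u)=\sum_{i=1}^l\min_{1\le j\le d}a_{ij}$ for any representative $u=\sum a_{ij}e_{ij}$ (this is independent of the representative). *)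

theory Defs
  imports Complex_Main
begin

definition Zld :: "nat \<Rightarrow> nat \<Rightarrow> (nat \<Rightarrow> nat \<Rightarrow> int) set" where
  "Zld l d = {a. \<forall>i j. (l \<le> i \<or> d \<le> j) \<longrightarrow> a i j = 0}"

text \<open>a ~ b iff a - b lies in the span of eps_1 - eps_i, i.e. a - b = sum_i c_i eps_i with sum_i c_i = 0.\<close>
definition Mrel :: "nat \<Rightarrow> nat \<Rightarrow> ((nat \<Rightarrow> nat \<Rightarrow> int) \<times> (nat \<Rightarrow> nat \<Rightarrow> int)) set" where
  "Mrel l d = {(a, b). a \<in> Zld l d \<and> b \<in> Zld l d \<and>
     (\<exists>c :: nat \<Rightarrow> int. (\<Sum>i<l. c i) = 0 \<and> (\<forall>i<l. \<forall>j<d. a i j - b i j = c i))}"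

definition Mlat :: "nat \<Rightarrow> nat \<Rightarrow> (nat \<Rightarrow> nat \<Rightarrow> int) set set" where
  "Mlat l d = Zld l d // Mrel l d"

definition rep :: "(nat \<Rightarrow> nat \<Rightarrow> int) set \<Rightarrow> (nat \<Rightarrow> nat \<Rightarrow> int)" where
  "rep u = (SOME a. a \<in> u)"

text \<open>The image of an integer vector a in M_R lies in the cone generated by the e_ij
  iff some real representative a + sum_i c_i eps_i (sum_i c_i = 0) has all coordinates \<ge> 0.\<close>
definition in_cone :: "nat \<Rightarrow> nat \<Rightarrow> (nat \<Rightarrow> nat \<Rightarrow> int) \<Rightarrow> bool" where
  "in_cone l d a \<longleftrightarrow> (\<exists>c :: nat \<Rightarrow> real. (\<Sum>i<l. c i) = 0 \<and>
      (\<forall>i<l. \<forall>j<d. real_of_int (a i j) + c i \<ge> 0))"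

definition sigma_dual_M :: "nat \<Rightarrow> nat \<Rightarrow> (nat \<Rightarrow> nat \<Rightarrow> int) set set" where
  "sigma_dual_M l d = {u \<in> Mlat l d. \<exists>a\<in>u. in_cone l d a}"

definition degM :: "nat \<Rightarrow> nat \<Rightarrow> (nat \<Rightarrow> nat \<Rightarrow> int) set \<Rightarrow> int" where
  "degM l d u = (\<Sum>i<l. \<Sum>j<d. rep u i j)"

definition phiM :: "nat \<Rightarrow> nat \<Rightarrow> (nat \<Rightarrow> nat \<Rightarrow> int) set \<Rightarrow> int" where
  "phiM l d u = (\<Sum>i<l. Min ((\<lambda>j. rep u i j) ` {..<d}))"

end

theory Submission
  imports Defs "HOL-Library.Multiset" "HOL-Library.FuncSet"
begin

text \<open>Subtracting from each row of a representative \<open>a\<close> of \<open>u \<in> M\<close> its minimum gives a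
  normal form: the excesses \<open>a\<^sub>i\<^sub>j - min\<^sub>j a\<^sub>i\<^sub>j\<close> form a multiset on the \<open>l \<times> d\<close> grid
  that misses some cell in every row, its size is \<open>deg u - d \<phi>(u)\<close>, and together with \<open>\<phi>(u)\<close>
  it determines \<open>u\<close>. Since \<open>\<sigma>\<^sup>\<or>\<close> is cut out by \<open>\<phi> \<ge> 0\<close>, the points with \<open>\<phi> = m\<close> and
  \<open>deg = N d (l - 1)\<close> correspond to such multisets of size \<open>K = d (N (l - 1) - m)\<close>.
  Choosing a missed cell in each row (\<open>d\<^sup>l\<close> ways) and distributing \<open>K\<close> over the other
  \<open>e + 1 = l (d - 1)\<close> cells, freely or with every one of them occupied, bounds their number
  between \<open>d\<^sup>l C(K - 1, e)\<close> and \<open>d\<^sup>l C(K + e, e)\<close>; both are \<open>d\<^sup>l K\<^sup>e / e! + O(K\<^sup>e\<^sup>-\<^sup>1)\<close>.\<close>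

section \<open>Binomial coefficients against powers\<close>

lemma binomial_le_pow_nat: "n choose k \<le> n ^ k"
  by (cases "k \<le> n") (simp_all add: binomial_le_pow binomial_eq_0)

lemma binomial_add_le: "(n + i) choose Suc k \<le> (n choose Suc k) + i * (n + i) ^ k"
proof (induction i)
  case 0
  then show ?case by simp
next
  case (Suc i)
  have "(n + Suc i) choose Suc k = ((n + i) choose k) + ((n + i) choose Suc k)"
    by simp
  also have "\<dots> \<le> (n + i) ^ k + ((n choose Suc k) + i * (n + i) ^ k)"
    using binomial_le_pow_nat Suc.IH by (rule add_mono)
  also have "\<dots> \<le> (n choose Suc k) + Suc i * (n + Suc i) ^ k"
    using power_mono[of "n + i" "n + Suc i" k] by (simp add: algebra_simps add_mono mult_left_mono)
  finally show ?case .
qed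

lemma binomial_le_binomial_pred_add:
  "(n + k) choose k \<le> ((n - 1) choose k) + (k + 1) * (n + k) ^ (k - 1)"
proof (cases k)
  case 0
  then show ?thesis by simp
next
  case (Suc k')
  show ?thesis
  proof (cases n)
    case 0
    then show ?thesis using Suc by (simp add: Suc_le_eq)
  next
    case (Suc n')
    then show ?thesis
      using binomial_add_le[of n' "k + 1" k'] \<open>k = Suc k'\<close> by simp
  qed
qed

lemma pow_le_binomial_fact: "n ^ k \<le> ((n + k) choose k) * fact k"
proof (induction k)
  case 0
  then show ?case by simp
next
  case (Suc k)
  have "n ^ Suc k \<le> Suc (n + k) * (((n + k) choose k) * fact k)"
    unfolding power_Suc using Suc.IH by (intro mult_mono) auto
  also have "\<dots> = (Suc (n + k) choose Suc k) * Suc k * fact k"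
    by (metis Suc_times_binomial_eq mult.assoc)
  also have "\<dots> = ((n + Suc k) choose Suc k) * fact (Suc k)"
    by (simp del: binomial_Suc_Suc add: algebra_simps)
  finally show ?case .
qed

lemma binomial_sandwich_estimate:
  fixes D S :: real
  assumes "0 \<le> D" and "D * real ((K - 1) choose e) \<le> S" and "S \<le> D * real ((K + e) choose e)"
  shows "\<bar>S - D * real K ^ e / fact e\<bar> \<le> D * real (e + 1) * real (K + e) ^ (e - 1)"
proof -
  define L where "L = real ((K - 1) choose e)"
  define U where "U = real ((K + e) choose e)"
  define X where "X = real K ^ e / fact e"
  define E where "E = real (e + 1) * real (K + e) ^ (e - 1)"
  have "((K - 1) choose e) * fact e \<le> K ^ e"
    using binomial_fact_pow[of "K - 1" e] power_mono[of "K - 1" K e] by linarith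
  then have "L \<le> X"
    unfolding L_def X_def by (simp add: pos_le_divide_eq) (metis of_nat_fact of_nat_le_iff of_nat_mult of_nat_power)
  moreover have "X \<le> U"
    using pow_le_binomial_fact[of K e] unfolding U_def X_def
    by (simp add: pos_divide_le_eq) (metis of_nat_fact of_nat_le_iff of_nat_mult of_nat_power)
  moreover have "U \<le> L + E"
    using binomial_le_binomial_pred_add[of K e] unfolding U_def L_def E_def
    by (metis of_nat_add of_nat_le_iff of_nat_mult of_nat_power)
  ultimately have "D * L \<le> D * X" "D * X \<le> D * U" "D * U \<le> D * L + D * E"
    using assms(1) by (simp_all add: mult_left_mono flip: distrib_left)
  then have "\<bar>S - D * X\<bar> \<le> D * E"
    using assms(2,3) by (simp add: abs_le_iff L_def U_def)
  then show ?thesis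
    by (simp add: X_def E_def mult.assoc)
qed

section \<open>Multisets on a grid missing a cell in every row\<close>

definition off_graph :: "nat \<Rightarrow> nat \<Rightarrow> (nat \<Rightarrow> nat) \<Rightarrow> (nat \<times> nat) set" where
  "off_graph l d z = {(i, j). i < l \<and> j < d \<and> j \<noteq> z i}"

definition row_avoiding_msets :: "nat \<Rightarrow> nat \<Rightarrow> nat \<Rightarrow> (nat \<times> nat) multiset set" where
  "row_avoiding_msets l d K =
     {M \<in> multisets_of_size ({..<l} \<times> {..<d}) K. \<forall>i<l. \<exists>j<d. (i, j) \<notin># M}"

lemma off_graph_subset: "off_graph l d z \<subseteq> {..<l} \<times> {..<d}"
  by (auto simp: off_graph_def)

lemma finite_off_graph [simp]: "finite (off_graph l d z)"
  using off_graph_subset by (rule finite_subset) simp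

lemma card_off_graph:
  assumes "z \<in> {..<l} \<rightarrow>\<^sub>E {..<d}"
  shows "card (off_graph l d z) = l * (d - 1)"
proof -
  have "off_graph l d z = Sigma {..<l} (\<lambda>i. {..<d} - {z i})"
    by (auto simp: off_graph_def)
  then have "card (off_graph l d z) = (\<Sum>i<l. card ({..<d} - {z i}))"
    by simp
  also have "\<dots> = (\<Sum>i<l. d - 1)"
    using assms by (intro sum.cong) (auto simp: PiE_iff)
  finally show ?thesis by simp
qed

lemma finite_row_avoiding_msets: "finite (row_avoiding_msets l d K)"
  unfolding row_avoiding_msets_def by (rule finite_subset[of _ "multisets_of_size _ K"]) auto

lemma card_row_avoiding_msets_le:
  "card (row_avoiding_msets l d K) \<le> d ^ l * ((l * (d - 1) + K - 1) choose K)"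
proof -
  let ?Z = "{..<l} \<rightarrow>\<^sub>E {..<d}"
  have "row_avoiding_msets l d K \<subseteq> (\<Union>z\<in>?Z. multisets_of_size (off_graph l d z) K)"
  proof
    fix M assume M: "M \<in> row_avoiding_msets l d K"
    define z where "z = (\<lambda>i\<in>{..<l}. SOME j. j < d \<and> (i, j) \<notin># M)"
    have z: "z i < d \<and> (i, z i) \<notin># M" if "i < l" for i
      using M that someI_ex[of "\<lambda>j. j < d \<and> (i, j) \<notin># M"]
      by (auto simp: z_def row_avoiding_msets_def)
    then have "z \<in> ?Z" by (auto simp: z_def)
    moreover have "M \<in> multisets_of_size (off_graph l d z) K"
      using M z by (auto simp: row_avoiding_msets_def multisets_of_size_def off_graph_def)
    ultimately show "M \<in> (\<Union>z\<in>?Z. multisets_of_size (off_graph l d z) K)" by blast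
  qed
  then have "card (row_avoiding_msets l d K) \<le> card (\<Union>z\<in>?Z. multisets_of_size (off_graph l d z) K)"
    by (intro card_mono) (auto simp: finite_PiE)
  also have "\<dots> \<le> (\<Sum>z\<in>?Z. card (multisets_of_size (off_graph l d z) K))"
    by (rule card_UN_le) (simp add: finite_PiE)
  also have "\<dots> = (\<Sum>z\<in>?Z. (l * (d - 1) + K - 1) choose K)"
    by (intro sum.cong refl) (simp add: card_multisets_of_size card_off_graph)
  finally show ?thesis by (simp add: card_PiE)
qed

definition filled_off_graph :: "nat \<Rightarrow> nat \<Rightarrow> nat \<Rightarrow> (nat \<Rightarrow> nat) \<Rightarrow> (nat \<times> nat) multiset set" where
  "filled_off_graph l d n z = (\<lambda>M. M + mset_set (off_graph l d z)) ` multisets_of_size (off_graph l d z) n"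

lemma finite_filled_off_graph: "finite (filled_off_graph l d n z)"
  by (simp add: filled_off_graph_def finite_multisets_of_size)

lemma card_filled_off_graph:
  assumes "z \<in> {..<l} \<rightarrow>\<^sub>E {..<d}"
  shows "card (filled_off_graph l d n z) = (l * (d - 1) + n - 1) choose n"
proof -
  have "card (filled_off_graph l d n z) = card (multisets_of_size (off_graph l d z) n)"
    unfolding filled_off_graph_def by (rule card_image) (simp add: inj_on_def)
  then show ?thesis
    by (simp add: card_multisets_of_size card_off_graph[OF assms])
qed

lemma filled_off_graph_subset:
  assumes z: "z \<in> {..<l} \<rightarrow>\<^sub>E {..<d}"
  shows "filled_off_graph l d n z \<subseteq> row_avoiding_msets l d (n + l * (d - 1))"
proof
  fix N assume "N \<in> filled_off_graph l d n z"
  then obtain M where N: "N = M + mset_set (off_graph l d z)"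
    and M: "set_mset M \<subseteq> off_graph l d z" "size M = n"
    by (auto simp: filled_off_graph_def multisets_of_size_def)
  have "set_mset N \<subseteq> {..<l} \<times> {..<d}"
    using M(1) off_graph_subset[of l d z] by (auto simp: N)
  moreover have "size N = n + l * (d - 1)"
    using M(2) by (simp add: N card_off_graph[OF z])
  moreover have "z i < d \<and> (i, z i) \<notin># N" if "i < l" for i
  proof -
    have "(i, z i) \<notin> off_graph l d z"
      by (simp add: off_graph_def)
    then show ?thesis
      using M(1) that z by (auto simp: N)
  qed
  ultimately show "N \<in> row_avoiding_msets l d (n + l * (d - 1))"
    by (auto simp: row_avoiding_msets_def multisets_of_size_def)
qed

text \<open>The cells left uncovered by a member of \<open>filled_off_graph l d n z\<close> are exactly the graph
  of \<open>z\<close>.\<close>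
lemma filled_off_graph_disjoint:
  assumes z: "z \<in> {..<l} \<rightarrow>\<^sub>E {..<d}" and z': "z' \<in> {..<l} \<rightarrow>\<^sub>E {..<d}" and "z \<noteq> z'"
  shows "filled_off_graph l d n z \<inter> filled_off_graph l d n z' = {}"
proof -
  obtain i where i: "i < l" "z i \<noteq> z' i"
    using PiE_ext[OF z z'] \<open>z \<noteq> z'\<close> by (metis lessThan_iff)
  have in_z: "(i, z' i) \<in> off_graph l d z"
    using i z' by (auto simp: off_graph_def PiE_iff)
  have notin_z': "(i, z' i) \<notin> off_graph l d z'"
    by (simp add: off_graph_def)
  have "(i, z' i) \<in># N" if "N \<in> filled_off_graph l d n z" for N
    using that in_z by (auto simp: filled_off_graph_def)
  moreover have "(i, z' i) \<notin># N" if "N \<in> filled_off_graph l d n z'" for N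
    using that notin_z' by (auto simp: filled_off_graph_def multisets_of_size_def)
  ultimately show ?thesis
    by blast
qed

lemma card_row_avoiding_msets_ge:
  "d ^ l * ((l * (d - 1) + n - 1) choose n) \<le> card (row_avoiding_msets l d (n + l * (d - 1)))"
proof -
  let ?Z = "{..<l} \<rightarrow>\<^sub>E {..<d}"
  have "d ^ l * ((l * (d - 1) + n - 1) choose n) = (\<Sum>z\<in>?Z. card (filled_off_graph l d n z))"
    by (simp add: card_filled_off_graph card_PiE)
  also have "\<dots> = card (\<Union>z\<in>?Z. filled_off_graph l d n z)"
    using filled_off_graph_disjoint finite_filled_off_graph
    by (intro card_UN_disjoint[symmetric]) (simp_all add: finite_PiE)
  also have "\<dots> \<le> card (row_avoiding_msets l d (n + l * (d - 1)))"
    using filled_off_graph_subset by (intro card_mono finite_row_avoiding_msets) blast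
  finally show ?thesis .
qed

lemma card_row_avoiding_msets_estimate:
  assumes "l * (d - 1) = Suc e" and "0 < e"
  shows "\<bar>real (card (row_avoiding_msets l d K)) - real d ^ l * real K ^ e / fact e\<bar>
           \<le> real d ^ l * real (e + 1) * real (K + e) ^ (e - 1)"
proof (rule binomial_sandwich_estimate)
  have "d ^ l * ((K - 1) choose e) \<le> card (row_avoiding_msets l d K)"
  proof (cases "Suc e \<le> K")
    case True
    have "d ^ l * ((l * (d - 1) + (K - Suc e) - 1) choose (K - Suc e))
        \<le> card (row_avoiding_msets l d (K - Suc e + l * (d - 1)))"
      by (rule card_row_avoiding_msets_ge)
    moreover have "K - Suc e + l * (d - 1) = K" "l * (d - 1) + (K - Suc e) - 1 = K - 1"
      using True assms(1) by simp_all
    moreover have "(K - 1) choose (K - Suc e) = (K - 1) choose e"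
      using binomial_symmetric[of "K - Suc e" "K - 1"] True by simp
    ultimately show ?thesis
      by simp
  next
    case False
    then have "K - 1 < e"
      using assms(2) by linarith
    then show ?thesis
      by (simp add: binomial_eq_0)
  qed
  then show "real d ^ l * real ((K - 1) choose e) \<le> real (card (row_avoiding_msets l d K))"
    by (metis of_nat_le_iff of_nat_mult of_nat_power)
  have "card (row_avoiding_msets l d K) \<le> d ^ l * ((K + e) choose e)"
    using card_row_avoiding_msets_le[of l d K] binomial_symmetric[of K "K + e"] assms(1)
    by (simp add: add.commute)
  then show "real (card (row_avoiding_msets l d K)) \<le> real d ^ l * real ((K + e) choose e)"
    by (metis of_nat_le_iff of_nat_mult of_nat_power)
qed simp

section \<open>The row-minimum normal form of lattice points\<close>

lemma equiv_Mrel: "equiv (Zld l d) (Mrel l d)"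
proof (rule equivI)
  show "Mrel l d \<subseteq> Zld l d \<times> Zld l d"
    by (auto simp: Mrel_def)
  show "refl_on (Zld l d) (Mrel l d)"
    by (rule refl_onI) (auto simp: Mrel_def intro!: exI[of _ "\<lambda>_. 0"])
  show "sym (Mrel l d)"
  proof (rule symI)
    fix a b assume "(a, b) \<in> Mrel l d"
    then obtain c where "a \<in> Zld l d" "b \<in> Zld l d" "(\<Sum>i<l. c i) = 0"
      and "\<forall>i<l. \<forall>j<d. a i j - b i j = c i"
      by (auto simp: Mrel_def)
    moreover from this(4) have "\<forall>i<l. \<forall>j<d. b i j - a i j = - c i"
      by (metis minus_diff_eq)
    ultimately show "(b, a) \<in> Mrel l d"
      by (auto simp: Mrel_def sum_negf intro!: exI[of _ "\<lambda>i. - c i"])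
  qed
  show "trans (Mrel l d)"
  proof (rule transI)
    fix a b e assume "(a, b) \<in> Mrel l d" "(b, e) \<in> Mrel l d"
    then obtain c c' where "a \<in> Zld l d" "e \<in> Zld l d" "(\<Sum>i<l. c i) = 0" "(\<Sum>i<l. c' i) = 0"
      and ab: "\<forall>i<l. \<forall>j<d. a i j - b i j = c i" and be: "\<forall>i<l. \<forall>j<d. b i j - e i j = c' i"
      by (auto simp: Mrel_def)
    moreover have "a i j - e i j = c i + c' i" if "i < l" "j < d" for i j
      using ab be that by force
    ultimately show "(a, e) \<in> Mrel l d"
      by (auto simp: Mrel_def sum.distrib intro!: exI[of _ "\<lambda>i. c i + c' i"])
  qed
qed

lemma rep_in_class: "u \<in> Mlat l d \<Longrightarrow> rep u \<in> u"
  using in_quotient_imp_non_empty[OF equiv_Mrel] unfolding rep_def Mlat_def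
  by (simp add: some_in_eq)

lemma Mrel_rep: "u \<in> Mlat l d \<Longrightarrow> a \<in> u \<Longrightarrow> (a, rep u) \<in> Mrel l d"
  using in_quotient_imp_in_rel[OF equiv_Mrel] rep_in_class unfolding Mlat_def by blast

lemma rep_in_Zld: "u \<in> Mlat l d \<Longrightarrow> rep u \<in> Zld l d"
  using in_quotient_imp_subset[OF equiv_Mrel] rep_in_class unfolding Mlat_def by blast

lemma Mlat_eq_iff: "u \<in> Mlat l d \<Longrightarrow> v \<in> Mlat l d \<Longrightarrow> u = v \<longleftrightarrow> (rep u, rep v) \<in> Mrel l d"
  using quotient_eq_iff[OF equiv_Mrel] rep_in_class unfolding Mlat_def by blast

definition row_min :: "nat \<Rightarrow> (nat \<Rightarrow> nat \<Rightarrow> int) \<Rightarrow> nat \<Rightarrow> int" where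
  "row_min d a i = Min ((\<lambda>j. a i j) ` {..<d})"

definition phi_vec :: "nat \<Rightarrow> nat \<Rightarrow> (nat \<Rightarrow> nat \<Rightarrow> int) \<Rightarrow> int" where
  "phi_vec l d a = (\<Sum>i<l. row_min d a i)"

definition deg_vec :: "nat \<Rightarrow> nat \<Rightarrow> (nat \<Rightarrow> nat \<Rightarrow> int) \<Rightarrow> int" where
  "deg_vec l d a = (\<Sum>i<l. \<Sum>j<d. a i j)"

lemma phiM_eq: "phiM l d u = phi_vec l d (rep u)"
  by (simp add: phiM_def phi_vec_def row_min_def)

lemma degM_eq: "degM l d u = deg_vec l d (rep u)"
  by (simp add: degM_def deg_vec_def)

lemma row_min_eqI:
  assumes "j < d" "a i j = r" "\<And>j. j < d \<Longrightarrow> r \<le> a i j"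
  shows "row_min d a i = r"
  unfolding row_min_def using assms by (intro Min_eqI) auto

lemma row_min_le: "j < d \<Longrightarrow> row_min d a i \<le> a i j"
  unfolding row_min_def by (rule Min_le) auto

lemma row_min_attained:
  assumes "0 < d" shows "\<exists>j<d. a i j = row_min d a i"
proof -
  have "Min ((\<lambda>j. a i j) ` {..<d}) \<in> (\<lambda>j. a i j) ` {..<d}"
    using assms by (intro Min_in) auto
  then show ?thesis
    unfolding row_min_def by (metis imageE lessThan_iff)
qed

lemma row_min_shift:
  assumes "0 < d" and "\<And>j. j < d \<Longrightarrow> a i j = b i j + c"
  shows "row_min d a i = row_min d b i + c"
proof (rule antisym)
  obtain j where "j < d" "b i j = row_min d b i"
    using row_min_attained[OF assms(1)] by blast
  then show "row_min d a i \<le> row_min d b i + c"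
    using row_min_le[of j d a i] assms(2) by simp
  obtain j' where "j' < d" "a i j' = row_min d a i"
    using row_min_attained[OF assms(1)] by blast
  then show "row_min d b i + c \<le> row_min d a i"
    using row_min_le[of j' d b i] assms(2) by simp
qed

lemma deg_vec_ge_phi_vec: "int d * phi_vec l d a \<le> deg_vec l d a"
proof -
  have "(\<Sum>j<d. row_min d a i) \<le> (\<Sum>j<d. a i j)" for i
    by (intro sum_mono) (simp add: row_min_le)
  then show ?thesis
    unfolding phi_vec_def deg_vec_def by (simp add: sum_distrib_left sum_mono)
qed

definition excess :: "nat \<Rightarrow> nat \<Rightarrow> (nat \<Rightarrow> nat \<Rightarrow> int) \<Rightarrow> (nat \<times> nat) multiset" where
  "excess l d a = Abs_multiset (\<lambda>(i, j). if i < l \<and> j < d then nat (a i j - row_min d a i) else 0)"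

lemma count_excess:
  "count (excess l d a) (i, j) = (if i < l \<and> j < d then nat (a i j - row_min d a i) else 0)"
proof -
  have "finite {x. 0 < (\<lambda>(i, j). if i < l \<and> j < d then nat (a i j - row_min d a i) else 0) x}"
    by (rule finite_subset[of _ "{..<l} \<times> {..<d}"]) (auto split: if_splits)
  then show ?thesis
    unfolding excess_def by simp
qed

lemma set_mset_excess: "set_mset (excess l d a) \<subseteq> {..<l} \<times> {..<d}"
  by (auto simp: count_excess simp flip: count_greater_zero_iff split: if_splits)

lemma excess_row_gap:
  assumes "0 < d" "i < l"
  shows "\<exists>j<d. (i, j) \<notin># excess l d a"
proof -
  obtain j where j: "j < d" "a i j = row_min d a i"
    using row_min_attained[OF assms(1)] by blast
  then have "(i, j) \<notin># excess l d a"
    using assms(2) by (simp add: not_in_iff count_excess)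
  then show ?thesis
    using j(1) by blast
qed

lemma size_excess: "int (size (excess l d a)) = deg_vec l d a - int d * phi_vec l d a"
proof -
  have "size (excess l d a) = (\<Sum>x\<in>{..<l} \<times> {..<d}. count (excess l d a) x)"
    unfolding size_multiset_overloaded_eq
    by (rule sum.mono_neutral_left) (auto simp: set_mset_excess not_in_iff)
  then have "int (size (excess l d a)) = (\<Sum>i<l. \<Sum>j<d. int (count (excess l d a) (i, j)))"
    by (simp add: sum.cartesian_product)
  also have "\<dots> = (\<Sum>i<l. \<Sum>j<d. a i j - row_min d a i)"
    by (intro sum.cong refl) (simp add: count_excess row_min_le)
  finally show ?thesis
    by (simp add: deg_vec_def phi_vec_def sum_subtractf sum_distrib_left)
qed

lemma Mrel_invariants:
  assumes "(a, b) \<in> Mrel l d" and "0 < d"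
  shows "deg_vec l d a = deg_vec l d b" "phi_vec l d a = phi_vec l d b" "excess l d a = excess l d b"
proof -
  obtain c where c0: "(\<Sum>i<l. c i) = 0" and c: "\<forall>i<l. \<forall>j<d. a i j - b i j = c i"
    using assms(1) by (auto simp: Mrel_def)
  have a: "a i j = b i j + c i" if "i < l" "j < d" for i j
    using c that by force
  have row_min: "row_min d a i = row_min d b i + c i" if "i < l" for i
    using row_min_shift[OF assms(2)] a that by blast
  have "deg_vec l d a = (\<Sum>i<l. \<Sum>j<d. b i j + c i)"
    unfolding deg_vec_def using a by simp
  also have "\<dots> = deg_vec l d b + int d * (\<Sum>i<l. c i)"
    by (simp add: deg_vec_def sum.distrib sum_distrib_left)
  finally show "deg_vec l d a = deg_vec l d b"
    using c0 by simp
  show "phi_vec l d a = phi_vec l d b"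
    using c0 row_min by (simp add: phi_vec_def sum.distrib)
  show "excess l d a = excess l d b"
    by (rule multiset_eqI) (auto simp: count_excess a row_min)
qed

lemma Mrel_if_excess_eq:
  assumes "a \<in> Zld l d" "b \<in> Zld l d" "phi_vec l d a = phi_vec l d b" "excess l d a = excess l d b"
  shows "(a, b) \<in> Mrel l d"
proof -
  have "a i j - b i j = row_min d a i - row_min d b i" if "i < l" "j < d" for i j
    using arg_cong[OF assms(4), of "\<lambda>M. count M (i, j)"] that row_min_le[of j d a i] row_min_le[of j d b i]
    by (simp add: count_excess)
  moreover have "(\<Sum>i<l. row_min d a i - row_min d b i) = 0"
    using assms(3) by (simp add: phi_vec_def sum_subtractf)
  ultimately show ?thesis
    using assms(1,2) unfolding Mrel_def by blast
qed

lemma in_cone_iff_phi_vec_nonneg: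
  assumes "0 < l" "0 < d"
  shows "in_cone l d a \<longleftrightarrow> 0 \<le> phi_vec l d a"
proof
  assume "in_cone l d a"
  then obtain c :: "nat \<Rightarrow> real" where c: "(\<Sum>i<l. c i) = 0"
    and nonneg: "\<forall>i<l. \<forall>j<d. 0 \<le> real_of_int (a i j) + c i"
    unfolding in_cone_def by auto
  have "0 \<le> real_of_int (row_min d a i) + c i" if "i < l" for i
    using row_min_attained[OF assms(2), of a i] nonneg that by metis
  then have "0 \<le> (\<Sum>i<l. real_of_int (row_min d a i) + c i)"
    by (intro sum_nonneg) auto
  then show "0 \<le> phi_vec l d a"
    using c by (simp add: phi_vec_def sum.distrib flip: of_int_sum)
next
  assume phi: "0 \<le> phi_vec l d a"
  define c where "c i = real_of_int (phi_vec l d a) / real l - real_of_int (row_min d a i)" for i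
  have "(\<Sum>i<l. c i) = 0"
    using assms(1) by (simp add: c_def sum_subtractf phi_vec_def)
  moreover have "0 \<le> real_of_int (a i j) + c i" if "j < d" for i j
  proof -
    have "real_of_int (row_min d a i) \<le> real_of_int (a i j)"
      using row_min_le[OF that] by simp
    moreover have "0 \<le> real_of_int (phi_vec l d a) / real l"
      using phi by simp
    ultimately show ?thesis
      unfolding c_def by linarith
  qed
  ultimately show "in_cone l d a"
    unfolding in_cone_def by blast
qed

lemma sigma_dual_M_iff:
  assumes "0 < l" "0 < d"
  shows "u \<in> sigma_dual_M l d \<longleftrightarrow> u \<in> Mlat l d \<and> 0 \<le> phiM l d u"
proof
  assume "u \<in> sigma_dual_M l d"
  then obtain a where u: "u \<in> Mlat l d" and "a \<in> u" "in_cone l d a"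
    unfolding sigma_dual_M_def by blast
  then have "(a, rep u) \<in> Mrel l d" "0 \<le> phi_vec l d a"
    using Mrel_rep in_cone_iff_phi_vec_nonneg[OF assms] by auto
  then show "u \<in> Mlat l d \<and> 0 \<le> phiM l d u"
    using u Mrel_invariants(2)[OF _ assms(2)] by (simp add: phiM_eq)
next
  assume "u \<in> Mlat l d \<and> 0 \<le> phiM l d u"
  then show "u \<in> sigma_dual_M l d"
    unfolding sigma_dual_M_def using rep_in_class in_cone_iff_phi_vec_nonneg[OF assms]
    by (auto simp: phiM_eq)
qed

lemma excess_realizes_row_avoiding:
  assumes "0 < l" and M: "M \<in> row_avoiding_msets l d K"
  shows "\<exists>a \<in> Zld l d. phi_vec l d a = int m \<and> deg_vec l d a = int (K + d * m) \<and> excess l d a = M"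
proof -
  have M_grid: "set_mset M \<subseteq> {..<l} \<times> {..<d}" and "size M = K"
    using M by (simp_all add: row_avoiding_msets_def multisets_of_size_def)
  define a where "a i j = (if i < l \<and> j < d then int (count M (i, j)) + (if i = 0 then int m else 0) else 0)"
    for i j
  have row_min_a: "row_min d a i = (if i = 0 then int m else 0)" if i: "i < l" for i
  proof -
    obtain j where "j < d" "(i, j) \<notin># M"
      using M i by (auto simp: row_avoiding_msets_def)
    then show ?thesis
      using i by (intro row_min_eqI[of j]) (auto simp: a_def not_in_iff)
  qed
  have "phi_vec l d a = (\<Sum>i<l. if i = 0 then int m else 0)"
    unfolding phi_vec_def by (intro sum.cong refl) (simp add: row_min_a)
  then have phi_a: "phi_vec l d a = int m"
    using assms(1) by simp
  have excess_a: "excess l d a = M"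
  proof (rule multiset_eqI)
    fix x :: "nat \<times> nat"
    obtain i j where x: "x = (i, j)"
      by fastforce
    show "count (excess l d a) x = count M x"
    proof (cases "i < l \<and> j < d")
      case True
      then show ?thesis
        by (simp add: x count_excess a_def row_min_a)
    next
      case False
      then have "x \<notin># M"
        using M_grid x by auto
      then show ?thesis
        using False by (auto simp: x count_excess not_in_iff)
    qed
  qed
  moreover have "deg_vec l d a = int (K + d * m)"
    using size_excess[of l d a] phi_a excess_a \<open>size M = K\<close> by simp
  moreover have "a \<in> Zld l d"
    by (simp add: Zld_def a_def)
  ultimately show ?thesis
    using phi_a by blast
qed

definition phi_deg_level :: "nat \<Rightarrow> nat \<Rightarrow> nat \<Rightarrow> nat \<Rightarrow> (nat \<Rightarrow> nat \<Rightarrow> int) set set" where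
  "phi_deg_level l d m n = {u \<in> sigma_dual_M l d. phiM l d u = int m \<and> degM l d u = int n}"

lemma bij_betw_excess_rep:
  assumes "0 < l" "0 < d"
  shows "bij_betw (\<lambda>u. excess l d (rep u)) (phi_deg_level l d m (K + d * m)) (row_avoiding_msets l d K)"
proof (rule bij_betwI')
  fix u v assume "u \<in> phi_deg_level l d m (K + d * m)" "v \<in> phi_deg_level l d m (K + d * m)"
  then have "u \<in> Mlat l d" "v \<in> Mlat l d" "phi_vec l d (rep u) = phi_vec l d (rep v)"
    using sigma_dual_M_iff[OF assms] by (auto simp: phi_deg_level_def phiM_eq)
  then show "excess l d (rep u) = excess l d (rep v) \<longleftrightarrow> u = v"
    using Mlat_eq_iff Mrel_if_excess_eq[OF rep_in_Zld rep_in_Zld] by blast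
next
  fix u assume "u \<in> phi_deg_level l d m (K + d * m)"
  then have "size (excess l d (rep u)) = K"
    using size_excess[of l d "rep u"] by (simp add: phi_deg_level_def phiM_eq degM_eq)
  then show "excess l d (rep u) \<in> row_avoiding_msets l d K"
    using set_mset_excess excess_row_gap[OF assms(2)]
    by (auto simp: row_avoiding_msets_def multisets_of_size_def)
next
  fix M assume "M \<in> row_avoiding_msets l d K"
  then obtain a where a: "a \<in> Zld l d" "phi_vec l d a = int m" "deg_vec l d a = int (K + d * m)"
    and M: "M = excess l d a"
    using excess_realizes_row_avoiding[OF assms(1)] by metis
  then have u: "Mrel l d `` {a} \<in> Mlat l d"
    unfolding Mlat_def by (intro quotientI)
  have "(a, rep (Mrel l d `` {a})) \<in> Mrel l d"
    using Mrel_rep[OF u equiv_class_self[OF equiv_Mrel a(1)]] .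
  then have "Mrel l d `` {a} \<in> phi_deg_level l d m (K + d * m) \<and> M = excess l d (rep (Mrel l d `` {a}))"
    using Mrel_invariants[OF _ assms(2)] sigma_dual_M_iff[OF assms] u a M
    by (simp add: phi_deg_level_def phiM_eq degM_eq)
  then show "\<exists>u \<in> phi_deg_level l d m (K + d * m). M = excess l d (rep u)"
    by blast
qed

lemma phiM_bounds:
  assumes "0 < l" "0 < d" "u \<in> sigma_dual_M l d" "degM l d u = int (d * k)"
  shows "0 \<le> phiM l d u \<and> phiM l d u \<le> int k"
proof -
  have "int d * phiM l d u \<le> int d * int k"
    using deg_vec_ge_phi_vec[of d l "rep u"] assms(4) by (simp add: phiM_eq degM_eq)
  then show ?thesis
    using assms(2,3) sigma_dual_M_iff[OF assms(1,2)] by simp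
qed

lemma phi_deg_level_estimate:
  assumes "0 < l" and e: "l * (d - 1) = Suc e" "0 < e" and N: "1 \<le> N" and m: "m \<le> (l - 1) * N"
  shows "finite (phi_deg_level l d m (N * d * (l - 1)))"
    and "\<bar>real (card (phi_deg_level l d m (N * d * (l - 1))))
           - real d ^ (l * d - 1) * real (N * (l - 1) - m) ^ e / fact e\<bar>
         \<le> real d ^ l * real (e + 1) * real (d * (l - 1) + e) ^ (e - 1) * real N ^ (e - 1)"
proof -
  define K where "K = d * (N * (l - 1) - m)"
  have "N * (l - 1) - m + m = N * (l - 1)"
    using m by (simp add: mult.commute)
  then have "N * d * (l - 1) = K + d * m"
    unfolding K_def by (metis add_mult_distrib2 mult.commute mult.left_commute)
  moreover have "0 < d"
    using e(1) by (cases d) auto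
  ultimately have bij: "bij_betw (\<lambda>u. excess l d (rep u))
      (phi_deg_level l d m (N * d * (l - 1))) (row_avoiding_msets l d K)"
    using bij_betw_excess_rep[OF assms(1)] by simp
  then show "finite (phi_deg_level l d m (N * d * (l - 1)))"
    using bij_betw_finite finite_row_avoiding_msets by blast
  have "l * d - 1 = l + e"
    using e(1) assms(1) by (simp add: algebra_simps diff_mult_distrib2)
  then have leading: "real d ^ (l * d - 1) * real (N * (l - 1) - m) ^ e = real d ^ l * real K ^ e"
    by (simp add: K_def power_add power_mult_distrib)
  have "K \<le> d * (N * (l - 1))"
    unfolding K_def by (intro mult_le_mono2) simp
  then have "K + e \<le> d * (N * (l - 1)) + e * N"
    using N by (intro add_mono) simp_all
  also have "\<dots> = (d * (l - 1) + e) * N"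
    by (simp add: algebra_simps)
  finally have "real (K + e) ^ (e - 1) \<le> real ((d * (l - 1) + e) * N) ^ (e - 1)"
    by (intro power_mono) (simp_all only: of_nat_le_iff of_nat_0_le_iff)
  then have error: "real d ^ l * real (e + 1) * real (K + e) ^ (e - 1)
      \<le> real d ^ l * real (e + 1) * (real (d * (l - 1) + e) ^ (e - 1) * real N ^ (e - 1))"
    by (intro mult_left_mono) (simp_all add: power_mult_distrib)
  show "\<bar>real (card (phi_deg_level l d m (N * d * (l - 1))))
          - real d ^ (l * d - 1) * real (N * (l - 1) - m) ^ e / fact e\<bar>
        \<le> real d ^ l * real (e + 1) * real (d * (l - 1) + e) ^ (e - 1) * real N ^ (e - 1)"
    using card_row_avoiding_msets_estimate[OF e, of K] bij_betw_same_card[OF bij] leading error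
    by (simp add: mult.assoc)
qed

theorem mainTheorem13:
  fixes l d :: nat
  assumes "l \<ge> 2" and "d \<ge> 2"
  shows "(\<forall>N :: nat. \<forall>u \<in> sigma_dual_M l d.
            degM l d u = int (N * (l - 1) * d) \<longrightarrow>
              0 \<le> phiM l d u \<and> phiM l d u \<le> int ((l - 1) * N))
       \<and> (\<exists>C :: real. \<exists>N0 :: nat. \<forall>N \<ge> N0. \<forall>m :: nat. m \<le> (l - 1) * N \<longrightarrow>
            finite {u \<in> sigma_dual_M l d. phiM l d u = int m \<and> degM l d u = int (N * d * (l - 1))} \<and>
            \<bar>real (card {u \<in> sigma_dual_M l d. phiM l d u = int m \<and> degM l d u = int (N * d * (l - 1))})
              - real d ^ (l * d - 1) * real (N * (l - 1) - m) ^ (l * (d - 1) - 1)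
                / fact (l * (d - 1) - 1)\<bar>
            \<le> C * real N ^ (l * (d - 1) - 2))"
proof (intro conjI)
  have l: "0 < l" and d: "0 < d"
    using assms by auto
  show "\<forall>N. \<forall>u \<in> sigma_dual_M l d. degM l d u = int (N * (l - 1) * d) \<longrightarrow>
          0 \<le> phiM l d u \<and> phiM l d u \<le> int ((l - 1) * N)"
  proof (intro allI ballI impI)
    fix N u
    assume "u \<in> sigma_dual_M l d" "degM l d u = int (N * (l - 1) * d)"
    then show "0 \<le> phiM l d u \<and> phiM l d u \<le> int ((l - 1) * N)"
      using phiM_bounds[OF l d, of u "(l - 1) * N"] by (simp add: ac_simps)
  qed
  define e where "e = l * (d - 1) - 1"
  have "2 * 1 \<le> l * (d - 1)"
    using assms by (intro mult_le_mono) auto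
  then have e: "l * (d - 1) = Suc e" "0 < e"
    unfolding e_def by auto
  show "\<exists>C N0. \<forall>N \<ge> N0. \<forall>m. m \<le> (l - 1) * N \<longrightarrow>
          finite {u \<in> sigma_dual_M l d. phiM l d u = int m \<and> degM l d u = int (N * d * (l - 1))} \<and>
          \<bar>real (card {u \<in> sigma_dual_M l d. phiM l d u = int m \<and> degM l d u = int (N * d * (l - 1))})
            - real d ^ (l * d - 1) * real (N * (l - 1) - m) ^ (l * (d - 1) - 1) / fact (l * (d - 1) - 1)\<bar>
          \<le> C * real N ^ (l * (d - 1) - 2)"
    using phi_deg_level_estimate[OF l e] e(1)
    by (intro exI[of _ "real d ^ l * real (e + 1) * real (d * (l - 1) + e) ^ (e - 1)"] exI[of _ 1])
      (simp add: phi_deg_level_def numeral_2_eq_2)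
qed

end
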